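(* Let $\mathcal F\subseteq 2^{[n]}$ be a non-empty simply rooted family of sets such that $\emptyset\notin\mathcal F$. For $k\ge 1$ let $c_k$ be the number of sets $A\in\mathcal F$ with $|A|=k$ such that $[i,A]\subseteq\mathcal F$ for every $i\in A$, and let $c_0=1$. Then the Euler characteristic of $X(\mathcal F)$ equals $$1-\sum_{k=0}^n(-1)^k c_k.$$
   Context: $[n]=\{1,\dots,n\}$, $2^{[n]}$ its power set, $[A,B]=\{C\in 2^{[n]}: A\subseteq C\subseteq B\}$, $[i,A]=[\{i\},A]$. A family $\mathcal F\subseteq 2^{[n]}$ is simply rooted if for every non-empty $A\in\mathcal F$ there is $i\in A$ with $[i,A]\subseteq\mathcal F$. The set of cubes of $\mathcal F$ is $\mathcal C(\mathcal F)=\{[A,B]: A\subseteq B,\ [A,B]\subseteq\mathcal F\}$. For $A\subseteq B$, $|[A,B]|=I_1\times\dots\times I_n\subseteq\mathbb R^n$ with $I_i=\{1\}$ if $i\in A$, $I_i=[0,1]$ if $i\in B\setminus A$, $I_i=\{0\}$ if $i\notin B$. The geometric realization of $\mathcal F$ is the cubical set $X(\mathcal F)=\bigcup_{[A,B]\in\mathcal C(\mathcal F)}|[A,B]|$. The Euler characteristic is that of the cubical homology of $X(\mathcal F)$ (alternating sum of ranks of its cubical homology groups). *)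

theory Defs
  imports "HOL-Analysis.Analysis" "HOL-Library.Function_Algebras"
begin

definition set_interval :: "nat set \<Rightarrow> nat set \<Rightarrow> nat set set" where
  "set_interval A B = {C. A \<subseteq> C \<and> C \<subseteq> B}"

definition simply_rooted :: "nat set set \<Rightarrow> bool" where
  "simply_rooted F \<longleftrightarrow> (\<forall>A\<in>F. A \<noteq> {} \<longrightarrow> (\<exists>i\<in>A. set_interval {i} A \<subseteq> F))"

text \<open>Cubes of F: the pair (A,B) stands for the cube [A,B], whose geometric realization
  is the elementary cube |[A,B]| of dimension card (B - A).\<close>
definition cubes :: "nat set set \<Rightarrow> (nat set \<times> nat set) set" where
  "cubes F = {(A, B). A \<subseteq> B \<and> set_interval A B \<subseteq> F}"

definition cube_dim :: "nat set \<times> nat set \<Rightarrow> nat" where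
  "cube_dim Q = card (snd Q - fst Q)"

text \<open>Cubical boundary coefficient: for Q = |[A,B]| = I_1 x ... x I_n, the boundary is
  sum over free coordinates i (in increasing order, j-th free one has sign (-1)^j) of
  (face with I_i = {1}) - (face with I_i = {0}); the face with I_i={1} is [A \<union> {i}, B],
  the face with I_i = {0} is [A, B - {i}].\<close>
definition bd_coeff :: "nat set \<times> nat set \<Rightarrow> nat set \<times> nat set \<Rightarrow> real" where
  "bd_coeff Q P =
     (\<Sum>i\<in>snd Q - fst Q. (-1) ^ card {j\<in>snd Q - fst Q. j < i} *
        ((if P = (insert i (fst Q), snd Q) then 1 else 0)
       - (if P = (fst Q, snd Q - {i}) then 1 else 0)))"

text \<open>Cubical chains with real coefficients: finitely many cubes, so chains are functions
  from cubes to reals vanishing outside the cubes of the given dimension.\<close>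
definition chains :: "nat set set \<Rightarrow> nat \<Rightarrow> (nat set \<times> nat set \<Rightarrow> real) set" where
  "chains F k = {c. \<forall>Q. c Q \<noteq> 0 \<longrightarrow> Q \<in> cubes F \<and> cube_dim Q = k}"

definition boundary :: "nat set set \<Rightarrow> (nat set \<times> nat set \<Rightarrow> real) \<Rightarrow> (nat set \<times> nat set \<Rightarrow> real)" where
  "boundary F c = (\<lambda>P. \<Sum>Q\<in>cubes F. c Q * bd_coeff Q P)"

abbreviation fscale :: "real \<Rightarrow> ('a \<Rightarrow> real) \<Rightarrow> ('a \<Rightarrow> real)" where
  "fscale r f \<equiv> (\<lambda>x. r * f x)"

text \<open>Rank of the k-th cubical homology group (dimension of rational/real homology,
  which equals the rank of the integral homology):
  dim ker \<partial>_k - dim im \<partial>_{k+1}.\<close>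
definition homology_rank :: "nat set set \<Rightarrow> nat \<Rightarrow> int" where
  "homology_rank F k =
     int (vector_space.dim fscale {c \<in> chains F k. boundary F c = 0})
   - int (vector_space.dim fscale (boundary F ` chains F (Suc k)))"

text \<open>Euler characteristic of the cubical homology of X(F) (a subfamily of 2^[n], so all
  cubes have dimension at most n and homology vanishes above degree n).\<close>
definition euler_char :: "nat \<Rightarrow> nat set set \<Rightarrow> int" where
  "euler_char n F = (\<Sum>k=0..n. (-1) ^ k * homology_rank F k)"

end

theory Submission
  imports Defs
begin

(*
  Rank-nullity for each boundary map turns the alternating sum of the Betti numbers into a
  telescoping sum, so the Euler characteristic is the alternating count of cubes,
  sum over [A,B] of (-1)^|B - A|.

  Group the cubes [A,B] by their top B in F. If r is a root of B, i.e. [r,B] is contained in F,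
  then the admissible bottoms A of B are exactly the sets of [r,B] together with the admissible
  bottoms of B - {r}, and the alternating sum over the interval [r,B] vanishes unless B = {r}.
  Induction on B shows that the sum of (-1)^|A| over the admissible bottoms is -1 if
  [i,B] is contained in F for every i in B and 0 otherwise; hence the cubes contribute
  -(sum over k >= 1 of (-1)^k c_k).
*)

lemma sum_neg_one_power_level_sets:
  fixes f :: "'a \<Rightarrow> nat"
  assumes "finite S" "finite K" "f ` S \<subseteq> K"
  shows "(\<Sum>k\<in>K. (-1) ^ k * of_nat (card {x\<in>S. f x = k})) = (\<Sum>x\<in>S. (-1 :: 'b::comm_ring_1) ^ f x)"
proof -
  have "(-1) ^ k * of_nat (card {x\<in>S. f x = k}) = (\<Sum>x\<in>{x\<in>S. f x = k}. (-1 :: 'b) ^ f x)" for k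
    by (simp add: mult.commute)
  then show ?thesis
    using sum.group[OF assms, of "\<lambda>x. (-1 :: 'b) ^ f x"] by (simp add: mult.commute)
qed

lemma sum_alternating_consecutive:
  fixes a :: "nat \<Rightarrow> 'a::comm_ring_1"
  shows "(\<Sum>k=0..n. (-1) ^ k * (a k + a (Suc k))) = a 0 + (-1) ^ n * a (Suc n)"
proof (induction n)
  case (Suc n)
  then show ?case by (simp add: algebra_simps)
qed simp

lemma neg_one_power_card_Diff:
  assumes "finite B" "A \<subseteq> B"
  shows "(-1 :: 'a::comm_ring_1) ^ card (B - A) = (-1) ^ card B * (-1) ^ card A"
proof -
  have "card B = card (B - A) + card A"
    using assms card_Diff_subset[OF finite_subset[OF assms(2,1)] assms(2)] card_mono by fastforce
  then show ?thesis by (simp add: power_add mult.assoc)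
qed

context vector_space
begin

lemma span_Int_span_of_disjoint_subsets:
  assumes B: "independent B" and X: "X \<subseteq> B" and Y: "Y \<subseteq> B" and XY: "X \<inter> Y = {}"
  shows "span X \<inter> span Y = {0}"
proof -
  have "v = 0" if v: "v \<in> span X" "v \<in> span Y" for v
  proof -
    have zero: "representation B v b = 0" for b
      using representation_extend[OF B v(1) X] representation_extend[OF B v(2) Y]
        representation_ne_zero[of X v b] representation_ne_zero[of Y v b] XY by fastforce
    have "v \<in> span B" using span_mono[OF X] v(1) by blast
    then have "v = (\<Sum>b | representation B v b \<noteq> 0. representation B v b *s b)"
      using sum_nonzero_representation_eq[OF B] by simp
    then show ?thesis by (simp add: zero)
  qed
  then show ?thesis using span_zero by blast
qed

end

context vector_space_pair
begin

lemma inj_on_span_complement_of_kernel_basis: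
  assumes lin: "Vector_Spaces.linear s1 s2 f" and B: "vs1.independent B" and "BK \<subseteq> B"
    and kernel: "\<And>x. x \<in> vs1.span B \<Longrightarrow> f x = 0 \<Longrightarrow> x \<in> vs1.span BK"
  shows "inj_on f (vs1.span (B - BK))"
proof -
  interpret f: Vector_Spaces.linear s1 s2 f by (rule lin)
  have "x = 0" if x: "x \<in> vs1.span (B - BK)" "f x = 0" for x
  proof -
    have "x \<in> vs1.span B" using x(1) vs1.span_mono[of "B - BK" B] by blast
    then have "x \<in> vs1.span BK" using kernel x(2) by blast
    then show "x = 0"
      using vs1.span_Int_span_of_disjoint_subsets[OF B, of "B - BK" BK] x(1) assms(3) by auto
  qed
  then show ?thesis using f.inj_on_iff_eq_0[OF vs1.subspace_span] by blast
qed

lemma rank_nullity: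
  assumes lin: "Vector_Spaces.linear s1 s2 f" and S: "vs1.subspace S"
    and W: "finite W" "S \<subseteq> vs1.span W"
  shows "vs1.dim S = vs1.dim {x\<in>S. f x = 0} + vs2.dim (f ` S)"
proof -
  interpret f: Vector_Spaces.linear s1 s2 f by (rule lin)
  define K where "K = {x\<in>S. f x = 0}"
  obtain BK where BK: "BK \<subseteq> K" "vs1.independent BK" "K \<subseteq> vs1.span BK" "card BK = vs1.dim K"
    using vs1.basis_exists by blast
  then obtain B where B: "BK \<subseteq> B" "B \<subseteq> S" "vs1.independent B" "S \<subseteq> vs1.span B"
    using vs1.maximal_independent_subset_extend[of BK S] unfolding K_def by blast
  have "finite B"
    using vs1.independent_span_bound[OF W(1) B(3)] B(2) W(2) by blast
  define C where "C = B - BK"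
  have "inj_on f (vs1.span C)"
    unfolding C_def
  proof (rule inj_on_span_complement_of_kernel_basis[OF lin B(3) B(1)])
    fix x assume "x \<in> vs1.span B" "f x = 0"
    moreover have "vs1.span B \<subseteq> S" using B(2) vs1.span_minimal[OF _ S] by blast
    ultimately show "x \<in> vs1.span BK" using BK(3) K_def by auto
  qed
  moreover have "vs1.independent C"
    using vs1.independent_mono[OF B(3)] C_def by blast
  ultimately have indep: "vs2.independent (f ` C)" and inj_C: "inj_on f C"
    using f.independent_injective_image inj_on_subset[OF _ vs1.span_superset] by blast+
  have "f ` S \<subseteq> vs2.span (f ` C)"
  proof -
    have "f ` B \<subseteq> insert 0 (f ` C)" using BK(1) K_def C_def by auto
    then have "f ` vs1.span B \<subseteq> vs2.span (f ` C)"
      using f.span_image vs2.span_mono by (metis vs2.span_insert_0)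
    then show ?thesis using B(4) by blast
  qed
  moreover have "f ` C \<subseteq> f ` S" using C_def B(2) by auto
  ultimately have "vs2.dim (f ` S) = card C"
    using vs2.basis_card_eq_dim[OF _ _ indep] card_image[OF inj_C] by simp
  moreover have "card B = card BK + card C"
    unfolding C_def using \<open>finite B\<close> B(1)
    by (metis card_Diff_subset card_mono finite_subset le_add_diff_inverse)
  moreover have "vs1.dim S = card B"
    using vs1.basis_card_eq_dim[OF B(2) B(4) B(3)] by simp
  ultimately show ?thesis using BK(4) K_def by simp
qed

end

interpretation V: vector_space "fscale :: real \<Rightarrow> ('a \<Rightarrow> real) \<Rightarrow> 'a \<Rightarrow> real"
  by unfold_locales (auto simp: algebra_simps)

interpretation V_pair: vector_space_pair
  "fscale :: real \<Rightarrow> ('a \<Rightarrow> real) \<Rightarrow> 'a \<Rightarrow> real"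
  "fscale :: real \<Rightarrow> ('b \<Rightarrow> real) \<Rightarrow> 'b \<Rightarrow> real" ..

lemma sum_fun_apply: "(\<Sum>a\<in>A. f a) x = (\<Sum>a\<in>A. f a x)"
  by (induction A rule: infinite_finite_induct) auto

lemma inj_indicator_singleton: "inj (\<lambda>x. indicator {x} :: 'a \<Rightarrow> 'b::zero_neq_one)"
proof (rule injI)
  fix x y :: 'a
  assume "indicator {x} = (indicator {y} :: 'a \<Rightarrow> 'b)"
  then have "indicator {x} x = (indicator {y} x :: 'b)" by simp
  then show "x = y" by (simp add: indicator_def split: if_splits)
qed

lemma independent_indicator_singletons:
  assumes "finite S"
  shows "V.independent ((\<lambda>x. indicator {x}) ` S :: ('a \<Rightarrow> real) set)"
proof (rule V.independent_if_scalars_zero)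
  show "finite ((\<lambda>x. indicator {x}) ` S :: ('a \<Rightarrow> real) set)" using assms by simp
  fix g :: "('a \<Rightarrow> real) \<Rightarrow> real" and e :: "'a \<Rightarrow> real"
  assume sum: "(\<Sum>e\<in>(\<lambda>x. indicator {x}) ` S. fscale (g e) e) = 0"
    and e: "e \<in> (\<lambda>x. indicator {x}) ` S"
  then obtain y where y: "y \<in> S" "e = indicator {y}" by blast
  have "0 = (\<Sum>e\<in>(\<lambda>x. indicator {x}) ` S. fscale (g e) e) y" using sum by simp
  also have "\<dots> = (\<Sum>x\<in>S. g (indicator {x}) * indicator {x} y)"
    by (simp add: sum_fun_apply sum.reindex[OF inj_on_subset[OF inj_indicator_singleton]])
  also have "\<dots> = g e"
    using y assms by (simp add: indicator_def if_distrib[of "\<lambda>x. _ * x"] cong: if_cong)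
  finally show "g e = 0" by simp
qed

lemma span_indicator_singletons:
  assumes "finite S"
  shows "V.span ((\<lambda>x. indicator {x}) ` S) = {c :: 'a \<Rightarrow> real. \<forall>x. c x \<noteq> 0 \<longrightarrow> x \<in> S}"
proof
  show "V.span ((\<lambda>x. indicator {x}) ` S) \<subseteq> {c. \<forall>x. c x \<noteq> 0 \<longrightarrow> x \<in> S}"
  proof (rule V.span_minimal)
    show "(\<lambda>x. indicator {x}) ` S \<subseteq> {c. \<forall>x. c x \<noteq> 0 \<longrightarrow> x \<in> S}"
      by (auto simp: indicator_def)
    show "V.subspace {c :: 'a \<Rightarrow> real. \<forall>x. c x \<noteq> 0 \<longrightarrow> x \<in> S}"
      by (auto simp: V.subspace_def) (metis add.right_neutral)
  qed
  show "{c. \<forall>x. c x \<noteq> 0 \<longrightarrow> x \<in> S} \<subseteq> V.span ((\<lambda>x. indicator {x}) ` S)"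
  proof
    fix c :: "'a \<Rightarrow> real" assume c: "c \<in> {c. \<forall>x. c x \<noteq> 0 \<longrightarrow> x \<in> S}"
    have "c = (\<Sum>x\<in>S. fscale (c x) (indicator {x}))"
    proof
      fix z
      show "c z = (\<Sum>x\<in>S. fscale (c x) (indicator {x})) z"
        using c assms
        by (auto simp: sum_fun_apply indicator_def of_bool_def if_distrib[of "\<lambda>x. _ * x"]
            cong: if_cong)
    qed
    also have "\<dots> \<in> V.span ((\<lambda>x. indicator {x}) ` S)"
      by (intro V.span_sum V.span_scale V.span_base) auto
    finally show "c \<in> V.span ((\<lambda>x. indicator {x}) ` S)" .
  qed
qed

lemma dim_functions_supported_on:
  assumes "finite S"
  shows "V.dim {c :: 'a \<Rightarrow> real. \<forall>x. c x \<noteq> 0 \<longrightarrow> x \<in> S} = card S"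
  using V.dim_span_eq_card_independent[OF independent_indicator_singletons[OF assms]]
  by (simp add: span_indicator_singletons[OF assms] card_image inj_on_subset[OF inj_indicator_singleton])

lemma cube_top_mem: "(A, B) \<in> cubes F \<Longrightarrow> B \<in> F"
  by (auto simp: cubes_def set_interval_def)

lemma cubes_subset_Pow:
  assumes "F \<subseteq> Pow X"
  shows "cubes F \<subseteq> Pow X \<times> Pow X"
proof
  fix Q assume "Q \<in> cubes F"
  then obtain A B where "Q = (A, B)" "A \<subseteq> B" "B \<in> F"
    using cube_top_mem by (cases Q) (auto simp: cubes_def)
  then show "Q \<in> Pow X \<times> Pow X" using assms by auto
qed

lemma finite_cubes:
  assumes "F \<subseteq> Pow X" "finite X"
  shows "finite (cubes F)"
  using cubes_subset_Pow[OF assms(1)] by (rule finite_subset) (simp add: assms(2) finite_cartesian_product)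

lemma cube_dim_le:
  assumes "F \<subseteq> Pow {1..n}" "Q \<in> cubes F"
  shows "cube_dim Q \<le> n"
proof -
  have "snd Q \<subseteq> {1..n}"
    using subsetD[OF cubes_subset_Pow[OF assms(1)] assms(2)] by (simp add: mem_Times_iff)
  then have "card (snd Q - fst Q) \<le> card {1..n}" by (intro card_mono) auto
  then show ?thesis by (simp add: cube_dim_def)
qed

lemma chains_eq_span:
  assumes "finite (cubes F)"
  shows "chains F k = V.span ((\<lambda>Q. indicator {Q}) ` {Q\<in>cubes F. cube_dim Q = k})"
  using assms by (simp add: span_indicator_singletons chains_def)

lemma dim_chains:
  assumes "finite (cubes F)"
  shows "V.dim (chains F k) = card {Q\<in>cubes F. cube_dim Q = k}"
  using assms dim_functions_supported_on[of "{Q\<in>cubes F. cube_dim Q = k}"] by (simp add: chains_def)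

lemma linear_boundary: "Vector_Spaces.linear fscale fscale (boundary F)"
  by unfold_locales
    (simp_all add: boundary_def fun_eq_iff distrib_right sum.distrib sum_distrib_left mult.assoc)

lemma boundary_chains_0:
  assumes "F \<subseteq> Pow X" "finite X" "c \<in> chains F 0"
  shows "boundary F c = 0"
proof -
  have "c Q * bd_coeff Q P = 0" if "Q \<in> cubes F" for Q P
  proof (cases "c Q = 0")
    case False
    then have "card (snd Q - fst Q) = 0" using assms(3) by (simp add: chains_def cube_dim_def)
    moreover have "finite (snd Q)"
      using subsetD[OF cubes_subset_Pow[OF assms(1)] that] assms(2) finite_subset
      by (auto simp: mem_Times_iff)
    ultimately have no_free_coordinates: "snd Q - fst Q = {}" by simp
    show ?thesis unfolding bd_coeff_def no_free_coordinates by simp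
  qed simp
  then show ?thesis by (auto simp: boundary_def fun_eq_iff intro!: sum.neutral)
qed

lemma chains_above_dim:
  assumes "F \<subseteq> Pow {1..n}" "n < k"
  shows "chains F k = {0}"
  using cube_dim_le[OF assms(1)] assms(2) by (fastforce simp: chains_def fun_eq_iff)

lemma euler_char_eq_sum_cubes:
  assumes F: "F \<subseteq> Pow {1..n}"
  shows "euler_char n F = (\<Sum>Q\<in>cubes F. (-1) ^ cube_dim Q)"
proof -
  have fin: "finite (cubes F)" using finite_cubes[OF F] by simp
  define im where "im k = int (V.dim (boundary F ` chains F k))" for k
  have homology_rank: "homology_rank F k = int (card {Q\<in>cubes F. cube_dim Q = k}) - (im k + im (Suc k))"
    for k
  proof -
    have "V.dim (chains F k) = V.dim {c\<in>chains F k. boundary F c = 0} + V.dim (boundary F ` chains F k)"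
      unfolding chains_eq_span[OF fin]
      by (rule V_pair.rank_nullity[OF linear_boundary V.subspace_span _ order_refl]) (simp add: fin)
    then show ?thesis by (simp add: homology_rank_def im_def dim_chains[OF fin])
  qed
  have "boundary F ` chains F k = {0}" if "k = 0 \<or> n < k" for k
  proof -
    have "0 \<in> chains F k" by (simp add: chains_def)
    moreover have "boundary F 0 = 0" by (simp add: boundary_def fun_eq_iff)
    ultimately show ?thesis
      using that boundary_chains_0[OF F] chains_above_dim[OF F] by fastforce
  qed
  then have "im 0 = 0" "im (Suc n) = 0"
    using V.dim_span_eq_card_independent[OF V.independent_empty] by (simp_all add: im_def)
  then have "euler_char n F = (\<Sum>k=0..n. (-1) ^ k * int (card {Q\<in>cubes F. cube_dim Q = k}))"
    using sum_alternating_consecutive[of im n]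
    by (simp add: euler_char_def homology_rank right_diff_distrib sum_subtractf)
  also have "\<dots> = (\<Sum>Q\<in>cubes F. (-1) ^ cube_dim Q)"
    by (rule sum_neg_one_power_level_sets) (use fin cube_dim_le[OF F] in auto)
  finally show ?thesis .
qed

definition cube_bottoms :: "nat set set \<Rightarrow> nat set \<Rightarrow> nat set set" where
  "cube_bottoms F B = {A. (A, B) \<in> cubes F}"

definition fully_rooted :: "nat set set \<Rightarrow> nat set \<Rightarrow> bool" where
  "fully_rooted F A \<longleftrightarrow> (\<forall>i\<in>A. set_interval {i} A \<subseteq> F)"

lemma set_interval_mono: "A' \<subseteq> A \<Longrightarrow> B \<subseteq> B' \<Longrightarrow> set_interval A B \<subseteq> set_interval A' B'"
  by (auto simp: set_interval_def)

lemma set_interval_subset_split: "set_interval A B \<subseteq> set_interval A (B - {r}) \<union> set_interval {r} B"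
  by (auto simp: set_interval_def)

lemma finite_set_interval: "finite B \<Longrightarrow> finite (set_interval A B)"
  by (rule finite_subset[of _ "Pow B"]) (auto simp: set_interval_def)

lemma sum_set_interval_neg_one_power_card:
  assumes "finite B" "A \<subseteq> B"
  shows "(\<Sum>C\<in>set_interval A B. (-1 :: 'a::ring_1) ^ card C) = (if A = B then (-1) ^ card B else 0)"
proof (cases "A = B")
  case True
  then have "set_interval A B = {B}" by (auto simp: set_interval_def)
  then show ?thesis using True by simp
next
  case False
  have eq: "{C \<in> set_interval A B. P (card C)} = {C. C \<subseteq> B \<and> A \<subseteq> C \<and> P (card C)}" for P
    by (auto simp: set_interval_def)
  have "A \<subset> B" using False assms(2) by blast
  then have "card {C \<in> set_interval A B. even (card C)} = card {C \<in> set_interval A B. odd (card C)}"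
    unfolding eq[of even] eq[of odd] by (rule card_subsupersets_even_odd[OF assms(1)])
  then show ?thesis
    using sum_alternating_cancels[OF finite_set_interval[OF assms(1)]] False by simp
qed

lemma fully_rooted_imp_mem: "fully_rooted F B \<Longrightarrow> B \<noteq> {} \<Longrightarrow> B \<in> F"
  by (auto simp: fully_rooted_def set_interval_def)

lemma finite_cube_bottoms: "finite B \<Longrightarrow> finite (cube_bottoms F B)"
  by (rule finite_subset[of _ "Pow B"]) (auto simp: cube_bottoms_def cubes_def)

lemma cube_bottoms_split_at_root:
  assumes root: "set_interval {r} B \<subseteq> F"
  shows "cube_bottoms F B = set_interval {r} B \<union> cube_bottoms F (B - {r})"
proof (intro set_eqI iffI)
  fix A assume "A \<in> cube_bottoms F B"
  then have A: "A \<subseteq> B" "set_interval A B \<subseteq> F" by (auto simp: cube_bottoms_def cubes_def)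
  show "A \<in> set_interval {r} B \<union> cube_bottoms F (B - {r})"
  proof (cases "r \<in> A")
    case True
    then show ?thesis using A by (simp add: set_interval_def)
  next
    case False
    then show ?thesis
      using A set_interval_mono[of A A "B - {r}" B] by (auto simp: cube_bottoms_def cubes_def)
  qed
next
  fix A assume "A \<in> set_interval {r} B \<union> cube_bottoms F (B - {r})"
  then consider "{r} \<subseteq> A" "A \<subseteq> B" | "A \<subseteq> B - {r}" "set_interval A (B - {r}) \<subseteq> F"
    by (auto simp: set_interval_def cube_bottoms_def cubes_def)
  then show "A \<in> cube_bottoms F B"
  proof cases
    case 1
    then show ?thesis
      using root set_interval_mono[of "{r}" A B B] by (auto simp: cube_bottoms_def cubes_def)
  next
    case 2
    then show ?thesis
      using root set_interval_subset_split[of A B r] by (auto simp: cube_bottoms_def cubes_def)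
  qed
qed

lemma fully_rooted_remove_root:
  assumes root: "set_interval {r} B \<subseteq> F" and "B - {r} \<noteq> {}"
  shows "fully_rooted F B \<longleftrightarrow> fully_rooted F (B - {r})"
proof
  assume "fully_rooted F B"
  then show "fully_rooted F (B - {r})"
    using set_interval_mono[of _ _ "B - {r}" B] by (fastforce simp: fully_rooted_def)
next
  assume full: "fully_rooted F (B - {r})"
  have "set_interval {i} B \<subseteq> F" if "i \<in> B" for i
  proof (cases "i = r")
    case False
    then have "set_interval {i} (B - {r}) \<subseteq> F" using full that by (simp add: fully_rooted_def)
    then show ?thesis using root set_interval_subset_split[of "{i}" B r] by blast
  qed (use root in simp)
  then show "fully_rooted F B" by (simp add: fully_rooted_def)
qed

lemma sum_cube_bottoms_neg_one_power_card:
  assumes sr: "simply_rooted F" and "{} \<notin> F" and "finite B" "B \<noteq> {}"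
  shows "(\<Sum>A\<in>cube_bottoms F B. (-1::int) ^ card A) = (if fully_rooted F B then -1 else 0)"
  using assms(3,4)
proof (induction B rule: finite_psubset_induct)
  case (psubset B)
  show ?case
  proof (cases "B \<in> F")
    case False
    then have "cube_bottoms F B = {}" using cube_top_mem by (auto simp: cube_bottoms_def)
    then show ?thesis using False psubset.prems fully_rooted_imp_mem by auto
  next
    case True
    then obtain r where r: "r \<in> B" "set_interval {r} B \<subseteq> F"
      using sr psubset.prems by (auto simp: simply_rooted_def)
    have "set_interval {r} B \<inter> cube_bottoms F (B - {r}) = {}"
      by (auto simp: set_interval_def cube_bottoms_def cubes_def)
    then have "(\<Sum>A\<in>cube_bottoms F B. (-1::int) ^ card A)
        = (\<Sum>A\<in>set_interval {r} B. (-1) ^ card A) + (\<Sum>A\<in>cube_bottoms F (B - {r}). (-1) ^ card A)"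
      using finite_set_interval[OF psubset.hyps(1)] finite_cube_bottoms[of "B - {r}"] psubset.hyps(1)
      by (simp add: cube_bottoms_split_at_root[OF r(2)] sum.union_disjoint)
    also have "\<dots> = (if fully_rooted F B then -1 else 0)"
    proof (cases "B = {r}")
      case True
      then have "cube_bottoms F (B - {r}) = {}"
        using \<open>{} \<notin> F\<close> cube_top_mem by (auto simp: cube_bottoms_def)
      moreover have "fully_rooted F B" using True r(2) by (simp add: fully_rooted_def)
      ultimately show ?thesis
        using True sum_set_interval_neg_one_power_card[of "{r}" "{r}"] by simp
    next
      case False
      then have "B - {r} \<subset> B" "B - {r} \<noteq> {}" using r(1) by auto
      then show ?thesis
        using psubset.IH[of "B - {r}"] fully_rooted_remove_root[OF r(2)] False r(1)
          sum_set_interval_neg_one_power_card[OF psubset.hyps(1), of "{r}"] by simp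
    qed
    finally show ?thesis .
  qed
qed

lemma sum_cubes_neg_one_power_dim:
  assumes "F \<subseteq> Pow X" "finite X" "simply_rooted F" "{} \<notin> F"
  shows "(\<Sum>Q\<in>cubes F. (-1::int) ^ cube_dim Q) = - (\<Sum>B\<in>{B\<in>F. fully_rooted F B}. (-1) ^ card B)"
proof -
  have finite_F: "finite F" using assms(1,2) finite_subset by (auto dest: finite_Pow_iff[THEN iffD2])
  have finite_B: "finite B" if "B \<in> F" for B using assms(1,2) that finite_subset by blast
  have bottoms_sub: "cube_bottoms F B \<subseteq> Pow B" for B by (auto simp: cube_bottoms_def cubes_def)
  have "cubes F = prod.swap ` (SIGMA B:F. cube_bottoms F B)"
    using cube_top_mem by (force simp: cube_bottoms_def)
  then have "(\<Sum>Q\<in>cubes F. (-1::int) ^ cube_dim Q)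
      = (\<Sum>(B, A)\<in>(SIGMA B:F. cube_bottoms F B). (-1) ^ card (B - A))"
    by (simp add: sum.reindex cube_dim_def case_prod_beta)
  also have "\<dots> = (\<Sum>B\<in>F. \<Sum>A\<in>cube_bottoms F B. (-1) ^ card (B - A))"
    by (subst sum.Sigma) (simp_all add: finite_F finite_B finite_cube_bottoms)
  also have "\<dots> = (\<Sum>B\<in>F. (-1) ^ card B * (\<Sum>A\<in>cube_bottoms F B. (-1) ^ card A))"
  proof (intro sum.cong refl)
    fix B assume "B \<in> F"
    then show "(\<Sum>A\<in>cube_bottoms F B. (-1::int) ^ card (B - A))
        = (-1) ^ card B * (\<Sum>A\<in>cube_bottoms F B. (-1) ^ card A)"
      using neg_one_power_card_Diff[OF finite_B[OF \<open>B \<in> F\<close>]] bottoms_sub[of B]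
      by (auto simp: sum_distrib_left intro!: sum.cong)
  qed
  also have "\<dots> = (\<Sum>B\<in>F. if fully_rooted F B then - ((-1) ^ card B) else 0)"
  proof (intro sum.cong refl)
    fix B assume "B \<in> F"
    moreover from this have "B \<noteq> {}" using assms(4) by blast
    ultimately show "(-1) ^ card B * (\<Sum>A\<in>cube_bottoms F B. (-1) ^ card A)
        = (if fully_rooted F B then - ((-1::int) ^ card B) else 0)"
      using sum_cube_bottoms_neg_one_power_card[OF assms(3,4) finite_B] by simp
  qed
  also have "\<dots> = - (\<Sum>B\<in>{B\<in>F. fully_rooted F B}. (-1) ^ card B)"
    unfolding sum.inter_filter[OF finite_F] sum_negf[symmetric] by (intro sum.cong) auto
  finally show ?thesis .
qed

lemma sum_fully_rooted_by_card:
  assumes "F \<subseteq> Pow {1..n}" "{} \<notin> F"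
  shows "(\<Sum>B\<in>{B\<in>F. fully_rooted F B}. (-1::int) ^ card B)
    = (\<Sum>k=1..n. (-1) ^ k * int (card {A\<in>F. card A = k \<and> fully_rooted F A}))"
proof -
  have "card B \<in> {1..n}" if "B \<in> F" for B
  proof -
    have "B \<subseteq> {1..n}" "B \<noteq> {}" using assms that by auto
    then show ?thesis
      using card_mono[of "{1..n}" B] finite_subset[of B "{1..n}"] card_gt_0_iff[of B] by auto
  qed
  moreover have "finite F" using assms(1) finite_subset by (auto dest: finite_Pow_iff[THEN iffD2])
  ultimately have "(\<Sum>B\<in>{B\<in>F. fully_rooted F B}. (-1::int) ^ card B)
      = (\<Sum>k=1..n. (-1) ^ k * of_nat (card {B\<in>{B\<in>F. fully_rooted F B}. card B = k}))"
    by (intro sum_neg_one_power_level_sets[symmetric]) auto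
  moreover have "{B\<in>{B\<in>F. fully_rooted F B}. card B = k} = {A\<in>F. card A = k \<and> fully_rooted F A}"
    for k
    by auto
  ultimately show ?thesis by simp
qed

theorem corollary2:
  fixes n :: nat and F :: "nat set set" and c :: "nat \<Rightarrow> int"
  assumes "F \<subseteq> Pow {1..n}"
    and "F \<noteq> {}"
    and "simply_rooted F"
    and "{} \<notin> F"
    and "\<And>k. k \<ge> 1 \<Longrightarrow> c k = int (card {A \<in> F. card A = k \<and> (\<forall>i\<in>A. set_interval {i} A \<subseteq> F)})"
    and "c 0 = 1"
  shows "euler_char n F = 1 - (\<Sum>k=0..n. (-1) ^ k * c k)"
proof -
  have fully_rooted_counts:
    "(\<Sum>k=1..n. (-1) ^ k * c k)
      = (\<Sum>k=1..n. (-1) ^ k * int (card {A\<in>F. card A = k \<and> fully_rooted F A}))"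
    using assms(5) by (intro sum.cong) (auto simp: fully_rooted_def)
  have "euler_char n F = (\<Sum>Q\<in>cubes F. (-1) ^ cube_dim Q)"
    by (rule euler_char_eq_sum_cubes[OF assms(1)])
  also have "\<dots> = - (\<Sum>B\<in>{B\<in>F. fully_rooted F B}. (-1) ^ card B)"
    by (rule sum_cubes_neg_one_power_dim[OF assms(1) _ assms(3,4)]) simp
  also have "\<dots> = - (\<Sum>k=1..n. (-1) ^ k * c k)"
    using sum_fully_rooted_by_card[OF assms(1,4)] fully_rooted_counts by simp
  also have "\<dots> = 1 - (\<Sum>k=0..n. (-1) ^ k * c k)"
    by (simp add: sum.atLeast_Suc_atMost assms(6))
  finally show ?thesis .
qed

end
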